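(* As formal power series in $z$, $$\sum_{n\ge0}\frac{r_n(s,q^2)}{(q;q)_n}z^n=\frac{e_q(sz)\,e_q(z)}{e_{q^2}(qsz^2)}.$$ Equivalently, for every integer $n\ge0$: (i) $r_n(s,q^2)=\sum_{j=0}^{\lfloor n/2\rfloor}(-1)^jq^{j^2}(q;q^2)_j\begin{bmatrix} n\\ 2j\end{bmatrix}_q s^j\,r_{n-2j}(s,q)$; (ii) $r_n(s,q^2)=\sum_{j=0}^{\lfloor n/2\rfloor}\begin{bmatrix} n\\ 2j\end{bmatrix}_q(q;q^2)_j(qs;q^2)_j\,s^{n-2j}\Big(-\frac1s;q\Big)_{n-2j}$; (iii) $\sum_{k=0}^{2n}(-1)^k(-s;q)_k\begin{bmatrix} 2n\\ k\end{bmatrix}_q r_{2n-k}(s,q^2)=(q;q^2)_n(qs;q^2)_n$ and $\sum_{k=0}^{2n+1}(-1)^k(-s;q)_k\begin{bmatrix} 2n+1\\ k\end{bmatrix}_q r_{2n+1-k}(s,q^2)=0$.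
   Context: $q$ is an indeterminate. $(x;q)_n=\prod_{j=0}^{n-1}(1-q^jx)$. The Gaussian binomial coefficient is $\begin{bmatrix} n\\ j\end{bmatrix}_q=\frac{(q;q)_n}{(q;q)_j(q;q)_{n-j}}$ for $0\le j\le n$ and $0$ otherwise. The Rogers–Szegö polynomials are $r_n(s,q)=\sum_{j=0}^n\begin{bmatrix} n\\ j\end{bmatrix}_q s^j$. $e_q(w)=\sum_{n\ge0}\frac{w^n}{(q;q)_n}$ as a formal power series, and $1/e_q(w)$ denotes its formal reciprocal. *)

theory Defs
  imports "HOL-Computational_Algebra.Formal_Power_Series"
begin

definition qpoch :: "'a::field \<Rightarrow> 'a \<Rightarrow> nat \<Rightarrow> 'a" where
  "qpoch x q n = (\<Prod>j<n. (1 - q ^ j * x))"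

definition qbinom :: "'a::field \<Rightarrow> nat \<Rightarrow> nat \<Rightarrow> 'a" where
  "qbinom q n j = (if j \<le> n then qpoch q q n / (qpoch q q j * qpoch q q (n - j)) else 0)"

definition rogers_szego :: "nat \<Rightarrow> 'a::field \<Rightarrow> 'a \<Rightarrow> 'a" where
  "rogers_szego n s q = (\<Sum>j=0..n. qbinom q n j * s ^ j)"

definition qexp :: "'a::field \<Rightarrow> 'a fps" where
  "qexp q = Abs_fps (\<lambda>n. 1 / qpoch q q n)"

end

theory Submission
  imports Defs
begin

text \<open>
Write \<open>f(cz)\<close> for \<open>fps_dilate c f\<close>. If \<open>q\<close> is not a root of unity, a power series \<open>G\<close> is
determined by \<open>G(0)\<close> and a \<open>q\<close>-difference equation \<open>Q(z) G(qz) = P(z) G(z)\<close> with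
\<open>Q(0) = P(0) = 1\<close>: the coefficient of \<open>z^n\<close> expresses \<open>(q^n - 1) g_n\<close> through \<open>g_0, ..., g_(n-1)\<close>.

The series \<open>F(z) = \<Sum>n. r_n(s,q^2) z^n / (q;q)_n\<close> satisfies
\<open>(1 - qsz^2) F(qz) = (1 - z)(1 - sz) F(z)\<close>, which is the three-term recurrence of the
Rogers-Szego polynomials in base \<open>q^2\<close> (itself read off from \<open>e_p(pz) = (1 - z) e_p(z)\<close> and
\<open>\<Sum>n. r_n(s,p) z^n / (p;p)_n = e_p(sz) e_p(z)\<close>). Each factor of the products
  \<open>e_q(sz) e_q(z) E_(q^2)(-qsz^2)\<close>,   \<open>\<phi>(z^2) \<psi>(sz)\<close>,   \<open>\<chi>(-z) F(z)\<close>
satisfies a first-order \<open>q\<close>-difference equation, so the first two products equal \<open>F\<close> and the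
third equals \<open>\<phi>(z^2)\<close>. Here \<open>\<phi>(w) = \<Sum>n. (qs;q^2)_n w^n / (q^2;q^2)_n\<close>,
\<open>\<psi>(w) = \<Sum>n. (-1/s;q)_n w^n / (q;q)_n\<close>, \<open>\<chi>(w) = \<Sum>n. (-s;q)_n w^n / (q;q)_n\<close>, and
\<open>E_p(w) = \<Sum>n. p^(n choose 2) w^n / (p;p)_n\<close> is Euler's second q-exponential, with
\<open>e_p(w) E_p(-w) = 1\<close>. Comparing coefficients in the three identities gives (i), (ii) and (iii).
\<close>

unbundle fps_syntax

section \<open>Dilation of formal power series\<close>

definition fps_dilate :: "'a::comm_ring_1 \<Rightarrow> 'a fps \<Rightarrow> 'a fps" where
  "fps_dilate c f = Abs_fps (\<lambda>n. c ^ n * f $ n)"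

lemma fps_dilate_nth [simp]: "fps_dilate c f $ n = c ^ n * f $ n"
  by (simp add: fps_dilate_def)

lemma fps_compose_linear_eq_dilate: "f oo (fps_const c * fps_X) = fps_dilate c f"
  by (simp add: fps_compose_linear fps_dilate_def)

lemma fps_dilate_mult: "fps_dilate c (f * g) = fps_dilate c f * fps_dilate c g"
proof (rule fps_ext)
  fix n
  have "fps_dilate c (f * g) $ n = (\<Sum>i=0..n. c ^ n * (f $ i * g $ (n - i)))"
    by (simp add: fps_mult_nth sum_distrib_left)
  also have "\<dots> = (\<Sum>i=0..n. c ^ i * f $ i * (c ^ (n - i) * g $ (n - i)))"
    by (rule sum.cong) (auto simp: mult_ac simp flip: power_add)
  finally show "fps_dilate c (f * g) $ n = (fps_dilate c f * fps_dilate c g) $ n"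
    by (simp add: fps_mult_nth)
qed

lemma fps_dilate_dilate: "fps_dilate a (fps_dilate b f) = fps_dilate (a * b) f"
  by (simp add: fps_eq_iff power_mult_distrib)

lemma fps_dilate_commute: "fps_dilate a (fps_dilate b f) = fps_dilate b (fps_dilate a f)"
  by (simp add: fps_dilate_dilate mult.commute)

lemma fps_dilate_one [simp]: "fps_dilate c 1 = 1"
  by (simp add: fps_eq_iff)

lemma fps_dilate_one_minus_X [simp]:
  "fps_dilate c (1 - fps_const a * fps_X) = 1 - fps_const (c * a) * fps_X"
  by (auto simp: fps_eq_iff le_Suc_eq)

lemma fps_dilate_one_minus_fps_X [simp]: "fps_dilate c (1 - fps_X) = 1 - fps_const c * fps_X"
  using fps_dilate_one_minus_X[of c 1] by simp

lemma one_minus_const_uminus_X [simp]: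
  "1 - fps_const (- a) * fps_X = 1 + fps_const a * (fps_X :: 'a::comm_ring_1 fps)"
  by (simp add: fps_eq_iff)

lemma one_plus_const_uminus_X [simp]:
  "1 + fps_const (- a) * fps_X = 1 - fps_const a * (fps_X :: 'a::comm_ring_1 fps)"
  by (simp add: fps_eq_iff)

lemma fps_dilate_one_plus_X [simp]:
  "fps_dilate c (1 + fps_const a * fps_X) = 1 + fps_const (c * a) * fps_X"
  using fps_dilate_one_minus_X[of c "- a"] by simp

lemma fps_dilate_one_plus_fps_X [simp]: "fps_dilate c (1 + fps_X) = 1 + fps_const c * fps_X"
  using fps_dilate_one_minus_X[of c "-1"] by simp

lemma one_minus_X_mult_nth_Suc [simp]:
  "((1 - fps_const (a::'a::comm_ring_1) * fps_X) * f) $ Suc n = f $ Suc n - a * f $ n"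
  by (simp add: algebra_simps)

lemma one_minus_fps_X_mult_nth_Suc [simp]:
  "((1 - fps_X) * f) $ Suc n = f $ Suc n - (f $ n :: 'a::comm_ring_1)"
  using one_minus_X_mult_nth_Suc[of 1 f] by simp

lemma one_plus_X_mult_one_minus_X: "(1 + fps_X) * (1 - fps_X) = 1 - (fps_X ^ 2 :: 'a::comm_ring_1 fps)"
  by (simp add: algebra_simps power2_eq_square)

lemma one_minus_X_power2_mult_nth:
  "((1 - fps_const c * fps_X ^ 2) * f) $ n = f $ n - (if n < 2 then 0 else c * f $ (n - 2 :: nat)
     :: 'a::comm_ring_1)"
proof -
  have "(1 - fps_const c * fps_X ^ 2) * f = f - fps_const c * (fps_X ^ 2 * f)"
    by (simp add: algebra_simps)
  then show ?thesis
    by (simp add: fps_X_power_mult_nth)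
qed

lemma one_minus_X_mult_fps_dilate_eqI:
  fixes f g :: "nat \<Rightarrow> 'a::comm_ring_1"
  assumes "f 0 = g 0"
    and "\<And>n. q ^ Suc n * f (Suc n) - a * (q ^ n * f n) = g (Suc n) - b * g n"
  shows "(1 - fps_const a * fps_X) * fps_dilate q (Abs_fps f) = (1 - fps_const b * fps_X) * Abs_fps g"
proof (rule fps_ext)
  fix n
  show "((1 - fps_const a * fps_X) * fps_dilate q (Abs_fps f)) $ n = ((1 - fps_const b * fps_X) * Abs_fps g) $ n"
    using assms by (cases n) simp_all
qed

lemma fps_dilate_equation_unique:
  fixes G H P Q :: "'a::idom fps"
  assumes q: "\<And>n. n > 0 \<Longrightarrow> q ^ n \<noteq> 1"
    and G: "Q * fps_dilate q G = P * G" and H: "Q * fps_dilate q H = P * H"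
    and "Q $ 0 = 1" "P $ 0 = 1" "G $ 0 = H $ 0"
  shows "G = H"
proof -
  define K where "K = G - H"
  have K: "Q * fps_dilate q K = P * K"
    using G H by (simp add: K_def fps_eq_iff algebra_simps fps_mult_nth sum_subtractf)
  have "K $ n = 0" for n
  proof (induction n rule: less_induct)
    case (less n)
    have lower: "(F * L) $ n = F $ 0 * L $ n" if "\<And>i. i < n \<Longrightarrow> L $ i = 0" for F L :: "'a fps"
    proof -
      have "(F * L) $ n = (\<Sum>i\<in>{0}. F $ i * L $ (n - i))"
        unfolding fps_mult_nth by (rule sum.mono_neutral_right) (auto simp: that)
      then show ?thesis by simp
    qed
    have "q ^ n * K $ n = K $ n"
      using arg_cong[OF K, of "\<lambda>f. f $ n"] lower[of "fps_dilate q K"] lower[of K] less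
        \<open>Q $ 0 = 1\<close> \<open>P $ 0 = 1\<close> by simp
    then have "(q ^ n - 1) * K $ n = 0"
      by (simp add: algebra_simps)
    moreover have "n = 0 \<Longrightarrow> K $ n = 0"
      using \<open>G $ 0 = H $ 0\<close> by (simp add: K_def)
    ultimately show ?case
      using q[of n] by auto
  qed
  then show ?thesis
    by (simp add: K_def fps_eq_iff)
qed

section \<open>Substituting \<open>z\<^sup>2\<close> for \<open>z\<close>\<close>

lemma fps_compose_X_power2_nth:
  "(f oo fps_X ^ 2) $ n = (if even n then f $ (n div 2) else (0::'a::comm_ring_1))"
proof -
  have "(f oo fps_X ^ 2) $ n = (\<Sum>i=0..n. if 2 * i = n then f $ i else 0)"
    unfolding fps_compose_nth by (rule sum.cong) (simp_all add: fps_X_power_nth flip: power_mult)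
  also have "\<dots> = (if even n then f $ (n div 2) else 0)"
    by (cases "even n") (auto intro!: sum.neutral elim!: evenE)
  finally show ?thesis .
qed

lemma fps_mult_compose_X_power2_nth:
  "(f * (g oo fps_X ^ 2)) $ n = (\<Sum>j=0..n div 2. g $ j * f $ (n - 2 * j) :: 'a::comm_ring_1)"
proof -
  have "(f * (g oo fps_X ^ 2)) $ n = (\<Sum>i\<in>{i\<in>{0..n}. even i}. f $ (n - i) * g $ (i div 2))"
    unfolding fps_mult_nth
    by (subst sum.atLeastAtMost_rev[of _ 0 n, simplified])
       (rule sum.mono_neutral_cong_right, auto simp: fps_compose_X_power2_nth)
  also have "\<dots> = (\<Sum>j=0..n div 2. g $ j * f $ (n - 2 * j))"
    by (rule sum.reindex_cong[of "\<lambda>j. 2 * j"]) (auto simp: inj_on_def elim!: evenE)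
  finally show ?thesis .
qed

lemma fps_compose_const_X_power2:
  "f oo (fps_const c * fps_X ^ 2) = fps_dilate c f oo (fps_X ^ 2 :: 'a::idom fps)"
proof -
  have "(fps_const c * fps_X) oo fps_X ^ 2 = fps_const c * (fps_X ^ 2 :: 'a fps)"
    by (simp add: fps_compose_mult_distrib)
  then have "f oo (fps_const c * fps_X ^ 2) = f oo ((fps_const c * fps_X) oo fps_X ^ 2)"
    by simp
  also have "\<dots> = fps_dilate c f oo fps_X ^ 2"
    by (simp add: fps_compose_assoc fps_compose_linear_eq_dilate)
  finally show ?thesis .
qed

lemma fps_dilate_compose_X_power2:
  "fps_dilate q (f oo fps_X ^ 2) = fps_dilate (q ^ 2) f oo (fps_X ^ 2 :: 'a::comm_ring_1 fps)"
  by (auto simp: fps_eq_iff fps_compose_X_power2_nth power_mult elim!: evenE)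

lemma fps_dilate_equation_compose_X_power2:
  fixes f P Q :: "'a::idom fps"
  assumes "Q * fps_dilate (q ^ 2) f = P * f"
  shows "(Q oo fps_X ^ 2) * fps_dilate q (f oo fps_X ^ 2) = (P oo fps_X ^ 2) * (f oo fps_X ^ 2)"
  using arg_cong[OF assms, of "\<lambda>g. g oo fps_X ^ 2"]
  by (simp add: fps_compose_mult_distrib fps_dilate_compose_X_power2)

lemma one_minus_X_compose_X_power2 [simp]:
  "(1 - fps_const a * fps_X) oo fps_X ^ 2 = 1 - fps_const a * (fps_X ^ 2 :: 'a::idom fps)"
  by (simp add: fps_compose_sub_distrib fps_compose_mult_distrib)

section \<open>q-Pochhammer symbols and q-exponential series\<close>

lemma qpoch_0 [simp]: "qpoch x q 0 = 1"
  by (simp add: qpoch_def)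

lemma qpoch_Suc: "qpoch x q (Suc n) = qpoch x q n * (1 - q ^ n * x)"
  by (simp add: qpoch_def)

lemma qpoch_zero_left [simp]: "qpoch 0 q n = 1"
  by (simp add: qpoch_def)

lemma power2_power_neq_one:
  fixes q :: "'a::monoid_mult"
  assumes "\<And>n. n > 0 \<Longrightarrow> q ^ n \<noteq> 1" and "n > 0"
  shows "(q ^ 2) ^ n \<noteq> 1"
proof -
  have "(q ^ 2) ^ n = q ^ (2 * n)"
    by (rule power_mult[symmetric])
  then show ?thesis
    using assms(1)[of "2 * n"] assms(2) by simp
qed

lemma qpoch_self_nonzero:
  assumes "\<And>n. n > 0 \<Longrightarrow> q ^ n \<noteq> 1"
  shows "qpoch q q n \<noteq> 0"
  using assms[of "Suc j" for j] by (auto simp: qpoch_def algebra_simps)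

lemma qpoch_double: "qpoch q q (2 * j) = qpoch q (q ^ 2) j * qpoch (q ^ 2) (q ^ 2) j"
  by (induction j) (simp_all add: qpoch_Suc power_mult power2_eq_square power_mult_distrib mult_ac)

lemma qpoch_odd_nonzero:
  assumes "\<And>n. n > 0 \<Longrightarrow> q ^ n \<noteq> 1"
  shows "qpoch q (q ^ 2) j \<noteq> 0"
  using qpoch_self_nonzero[OF assms, of "2 * j"] by (simp add: qpoch_double)

lemma power_square_eq_choose_two: "q ^ (j ^ 2) = q ^ j * (q ^ 2) ^ (j choose 2 :: nat)"
  for q :: "'a::monoid_mult"
proof -
  have "j ^ 2 = j + 2 * (j choose 2)"
    by (induction j) (simp_all add: numeral_2_eq_2 algebra_simps)
  then show ?thesis
    by (simp add: power_add power_mult)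
qed

text \<open>By the \<open>q\<close>-binomial theorem this is \<open>(az;p)_\<infinity> / (z;p)_\<infinity>\<close>; only its
  \<open>p\<close>-difference equation is used.\<close>

definition qbinomial_fps :: "'a::field \<Rightarrow> 'a \<Rightarrow> 'a fps" where
  "qbinomial_fps a p = Abs_fps (\<lambda>n. qpoch a p n / qpoch p p n)"

lemma qbinomial_fps_dilate:
  assumes p: "\<And>n. n > 0 \<Longrightarrow> p ^ n \<noteq> 1"
  shows "(1 - fps_const a * fps_X) * fps_dilate p (qbinomial_fps a p) = (1 - fps_X) * qbinomial_fps a p"
proof -
  have "(1 - fps_const a * fps_X) * fps_dilate p (qbinomial_fps a p)
      = (1 - fps_const 1 * fps_X) * qbinomial_fps a p"
    unfolding qbinomial_fps_def
  proof (rule one_minus_X_mult_fps_dilate_eqI)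
    fix n
    have "qpoch p p n \<noteq> 0" "1 - p ^ n * p \<noteq> 0"
      using qpoch_self_nonzero[OF p] p[of "Suc n"] by (auto simp: algebra_simps)
    then show "p ^ Suc n * (qpoch a p (Suc n) / qpoch p p (Suc n)) - a * (p ^ n * (qpoch a p n / qpoch p p n))
        = qpoch a p (Suc n) / qpoch p p (Suc n) - 1 * (qpoch a p n / qpoch p p n)"
      by (simp add: qpoch_Suc field_simps)
  qed simp
  then show ?thesis
    by simp
qed

lemma qexp_eq_qbinomial_fps: "qexp p = qbinomial_fps 0 p"
  by (simp add: qexp_def qbinomial_fps_def)

lemma qexp_dilate:
  assumes "\<And>n. n > 0 \<Longrightarrow> p ^ n \<noteq> 1"
  shows "fps_dilate p (qexp p) = (1 - fps_X) * qexp p"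
  using qbinomial_fps_dilate[OF assms, of 0] by (simp add: qexp_eq_qbinomial_fps)

definition qExp :: "'a::field \<Rightarrow> 'a fps" where
  "qExp p = Abs_fps (\<lambda>n. p ^ (n choose 2) / qpoch p p n)"

lemma qExp_dilate:
  assumes p: "\<And>n. n > 0 \<Longrightarrow> p ^ n \<noteq> 1"
  shows "(1 + fps_X) * fps_dilate p (qExp p) = qExp p"
proof -
  have "(1 - fps_const (-1) * fps_X) * fps_dilate p (qExp p) = (1 - fps_const 0 * fps_X) * qExp p"
    unfolding qExp_def
  proof (rule one_minus_X_mult_fps_dilate_eqI)
    fix n
    have "qpoch p p n \<noteq> 0" "1 - p ^ n * p \<noteq> 0"
      using qpoch_self_nonzero[OF p] p[of "Suc n"] by (auto simp: algebra_simps)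
    moreover have "p ^ (Suc n choose 2) = p ^ (n choose 2) * p ^ n"
      by (simp add: numeral_2_eq_2 power_add)
    ultimately show "p ^ Suc n * (p ^ (Suc n choose 2) / qpoch p p (Suc n))
        - (-1) * (p ^ n * (p ^ (n choose 2) / qpoch p p n))
        = p ^ (Suc n choose 2) / qpoch p p (Suc n) - 0 * (p ^ (n choose 2) / qpoch p p n)"
      by (simp add: qpoch_Suc field_simps)
  qed simp
  then show ?thesis
    by simp
qed

lemma qexp_mult_qExp_uminus:
  assumes p: "\<And>n. n > 0 \<Longrightarrow> p ^ n \<noteq> 1"
  shows "qexp p * fps_dilate (-1) (qExp p) = 1"
proof (rule fps_dilate_equation_unique[OF p])
  have "(1 - fps_X) * fps_dilate p (fps_dilate (-1) (qExp p)) = fps_dilate (-1) (qExp p)"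
    using arg_cong[OF qExp_dilate[OF p], of "fps_dilate (-1)"]
    by (simp add: fps_dilate_mult fps_dilate_commute[of p])
  then show "(1 - fps_X) * fps_dilate p (qexp p * fps_dilate (-1) (qExp p))
      = (1 - fps_X) * (qexp p * fps_dilate (-1) (qExp p))"
    by (simp add: fps_dilate_mult qexp_dilate[OF p] mult_ac)
qed (simp_all add: qexp_def qExp_def numeral_2_eq_2)

lemma inverse_qexp_compose_X_power2:
  assumes p: "\<And>n. n > 0 \<Longrightarrow> p ^ n \<noteq> 1"
  shows "inverse (qexp p oo (fps_const c * fps_X ^ 2)) = fps_dilate (- c) (qExp p) oo fps_X ^ 2"
proof (rule fps_inverse_unique)
  have "(qexp p oo (fps_const c * fps_X ^ 2)) * (fps_dilate (- c) (qExp p) oo fps_X ^ 2)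
      = fps_dilate c (qexp p * fps_dilate (-1) (qExp p)) oo fps_X ^ 2"
    by (simp add: fps_compose_const_X_power2 fps_compose_mult_distrib fps_dilate_mult fps_dilate_dilate)
  then show "(qexp p oo (fps_const c * fps_X ^ 2)) * (fps_dilate (- c) (qExp p) oo fps_X ^ 2) = 1"
    by (simp add: qexp_mult_qExp_uminus[OF p])
qed

lemma qExp_compose_X_power2_dilate:
  assumes p: "\<And>n. n > 0 \<Longrightarrow> (q ^ 2) ^ n \<noteq> 1"
  shows "(1 - fps_const c * fps_X ^ 2) * fps_dilate q (fps_dilate (- c) (qExp (q ^ 2)) oo fps_X ^ 2)
    = fps_dilate (- c) (qExp (q ^ 2)) oo fps_X ^ 2"
proof -
  have "(1 - fps_const c * fps_X) * fps_dilate (q ^ 2) (fps_dilate (- c) (qExp (q ^ 2)))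
      = 1 * fps_dilate (- c) (qExp (q ^ 2))"
    using arg_cong[OF qExp_dilate[OF p], of "fps_dilate (- c)"]
    by (simp add: fps_dilate_mult fps_dilate_commute[of "q ^ 2"])
  from fps_dilate_equation_compose_X_power2[OF this] show ?thesis
    by simp
qed

lemma qbinomial_fps_compose_X_power2_dilate:
  assumes p: "\<And>n. n > 0 \<Longrightarrow> (q ^ 2) ^ n \<noteq> 1"
  shows "(1 - fps_const a * fps_X ^ 2) * fps_dilate q (qbinomial_fps a (q ^ 2) oo fps_X ^ 2)
    = (1 - fps_X ^ 2) * (qbinomial_fps a (q ^ 2) oo fps_X ^ 2)"
  using fps_dilate_equation_compose_X_power2[OF qbinomial_fps_dilate[OF p, of a]]
  by (simp add: fps_compose_sub_distrib fps_compose_mult_distrib)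

section \<open>Rogers-Szeg\<ouml> polynomials\<close>

lemma rogers_szego_0 [simp]: "rogers_szego 0 s p = 1"
  by (simp add: rogers_szego_def qbinom_def)

lemma rogers_szego_1: "p \<noteq> 1 \<Longrightarrow> rogers_szego 1 s p = 1 + s"
  by (simp add: rogers_szego_def qbinom_def qpoch_def)

definition rogers_szego_fps :: "'a::field \<Rightarrow> 'a \<Rightarrow> 'a fps" where
  "rogers_szego_fps s p = Abs_fps (\<lambda>n. rogers_szego n s p / qpoch p p n)"

lemma rogers_szego_fps_eq:
  assumes p: "\<And>n. n > 0 \<Longrightarrow> p ^ n \<noteq> 1"
  shows "rogers_szego_fps s p = fps_dilate s (qexp p) * qexp p"
proof (rule fps_ext)
  fix n
  have "qbinom p n j * s ^ j / qpoch p p n = s ^ j / qpoch p p j * (1 / qpoch p p (n - j))"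
    if "j \<le> n" for j
    using that qpoch_self_nonzero[OF p] by (simp add: qbinom_def)
  then show "rogers_szego_fps s p $ n = (fps_dilate s (qexp p) * qexp p) $ n"
    by (simp add: rogers_szego_fps_def rogers_szego_def qexp_def fps_mult_nth sum_divide_distrib)
qed

lemma rogers_szego_fps_dilate:
  assumes p: "\<And>n. n > 0 \<Longrightarrow> p ^ n \<noteq> 1"
  shows "fps_dilate p (rogers_szego_fps s p) = (1 - fps_X) * ((1 - fps_const s * fps_X) * rogers_szego_fps s p)"
proof -
  have "fps_dilate p (fps_dilate s (qexp p)) = (1 - fps_const s * fps_X) * fps_dilate s (qexp p)"
    using arg_cong[OF qexp_dilate[OF p], of "fps_dilate s"]
    by (simp add: fps_dilate_mult fps_dilate_dilate mult.commute)
  then show ?thesis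
    by (simp only: rogers_szego_fps_eq[OF p] fps_dilate_mult qexp_dilate[OF p]) (simp add: mult_ac)
qed

lemma rogers_szego_Suc_Suc:
  assumes p: "\<And>n. n > 0 \<Longrightarrow> p ^ n \<noteq> 1"
  shows "rogers_szego (Suc (Suc n)) s p
    = (1 + s) * rogers_szego (Suc n) s p - s * (1 - p ^ Suc n) * rogers_szego n s p"
proof -
  define r where "r k = rogers_szego k s p" for k
  define u v where "u = 1 - p ^ Suc n" and "v = 1 - p ^ Suc (Suc n)"
  have nz: "qpoch p p n \<noteq> 0" "u \<noteq> 0" "v \<noteq> 0"
    using qpoch_self_nonzero[OF p] p[of "Suc n"] p[of "Suc (Suc n)"] by (auto simp: u_def v_def)
  have "p ^ Suc (Suc n) * rogers_szego_fps s p $ Suc (Suc n)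
      = rogers_szego_fps s p $ Suc (Suc n) - (1 + s) * rogers_szego_fps s p $ Suc n
        + s * rogers_szego_fps s p $ n"
    using arg_cong[OF rogers_szego_fps_dilate[OF p, of s], of "\<lambda>f. f $ Suc (Suc n)"]
    by (simp add: algebra_simps)
  then have "v * rogers_szego_fps s p $ Suc (Suc n)
      = (1 + s) * rogers_szego_fps s p $ Suc n - s * rogers_szego_fps s p $ n"
    by (simp add: v_def algebra_simps)
  moreover have "qpoch p p (Suc n) = qpoch p p n * u" "qpoch p p (Suc (Suc n)) = qpoch p p n * u * v"
    by (simp_all add: qpoch_Suc u_def v_def mult_ac)
  ultimately have "v * (r (Suc (Suc n)) / (qpoch p p n * u * v))
      = (1 + s) * (r (Suc n) / (qpoch p p n * u)) - s * (r n / qpoch p p n)"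
    by (simp add: rogers_szego_fps_def r_def)
  then have "qpoch p p n * (r (Suc (Suc n)) - ((1 + s) * r (Suc n) - s * u * r n)) = 0"
    using nz by (simp add: field_simps)
  then show ?thesis
    using nz by (simp add: r_def u_def)
qed

definition rogers_szego_sq_fps :: "'a::field \<Rightarrow> 'a \<Rightarrow> 'a fps" where
  "rogers_szego_sq_fps s q = Abs_fps (\<lambda>n. rogers_szego n s (q ^ 2) / qpoch q q n)"

lemma rogers_szego_sq_fps_dilate:
  assumes q: "\<And>n. n > 0 \<Longrightarrow> q ^ n \<noteq> 1"
  shows "(1 - fps_const (q * s) * fps_X ^ 2) * fps_dilate q (rogers_szego_sq_fps s q)
    = (1 - fps_X) * ((1 - fps_const s * fps_X) * rogers_szego_sq_fps s q)"
proof (rule fps_ext)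
  fix n
  define r where "r k = rogers_szego k s (q ^ 2)" for k
  have F: "rogers_szego_sq_fps s q $ k = r k / qpoch q q k" for k
    by (simp add: rogers_szego_sq_fps_def r_def)
  consider "n = 0" | "n = 1" | m where "n = Suc (Suc m)"
    by (metis One_nat_def not0_implies_Suc)
  then show "((1 - fps_const (q * s) * fps_X ^ 2) * fps_dilate q (rogers_szego_sq_fps s q)) $ n
    = ((1 - fps_X) * ((1 - fps_const s * fps_X) * rogers_szego_sq_fps s q)) $ n"
  proof cases
    case 1
    then show ?thesis
      by (simp add: rogers_szego_sq_fps_def)
  next
    case 2
    have "1 - q \<noteq> 0" "q ^ 2 \<noteq> 1"
      using q[of 1] power2_power_neq_one[OF q, of 1] by auto
    then show ?thesis
      using \<open>n = 1\<close> rogers_szego_1[of "q ^ 2" s]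
      by (simp add: one_minus_X_power2_mult_nth F r_def qpoch_def algebra_simps) (simp add: field_simps)
  next
    case 3
    define u v where "u = 1 - q ^ Suc m" and "v = 1 - q ^ Suc (Suc m)"
    have nz: "qpoch q q m \<noteq> 0" "u \<noteq> 0" "v \<noteq> 0"
      using qpoch_self_nonzero[OF q] q[of "Suc m"] q[of "Suc (Suc m)"] by (auto simp: u_def v_def)
    have "(q ^ 2) ^ Suc m = q ^ Suc m * q ^ Suc m"
      by (simp add: power2_eq_square power_mult_distrib)
    \<comment> \<open>\<open>2 - u = 1 + q ^ Suc m\<close>, so \<open>(2 - u) * u = 1 - (q ^ 2) ^ Suc m\<close>\<close>
    then have rec: "r (Suc (Suc m)) = (1 + s) * r (Suc m) - s * (2 - u) * u * r m"
      using rogers_szego_Suc_Suc[OF power2_power_neq_one[OF q], of m s] by (simp add: r_def u_def algebra_simps)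
    have "q ^ Suc (Suc m) * (r (Suc (Suc m)) / (qpoch q q m * u * v)) - q * s * (q ^ m * (r m / qpoch q q m))
      = (1 - v) * (r (Suc (Suc m)) / (qpoch q q m * u * v)) - s * (1 - u) * (r m / qpoch q q m)"
      by (simp add: u_def v_def algebra_simps)
    also have "\<dots> = r (Suc (Suc m)) / (qpoch q q m * u * v) - s * (r (Suc m) / (qpoch q q m * u))
        - (r (Suc m) / (qpoch q q m * u) - s * (r m / qpoch q q m))"
      using nz unfolding rec by (simp add: field_simps)
    moreover have "qpoch q q (Suc m) = qpoch q q m * u" "qpoch q q (Suc (Suc m)) = qpoch q q m * u * v"
      by (simp_all add: qpoch_Suc u_def v_def mult_ac)
    ultimately show ?thesis
      using \<open>n = Suc (Suc m)\<close> by (simp add: one_minus_X_power2_mult_nth F)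
  qed
qed

lemma rogers_szego_sq_fps_eq_mult_qExp:
  assumes q: "\<And>n. n > 0 \<Longrightarrow> q ^ n \<noteq> 1"
  shows "rogers_szego_sq_fps s q
    = rogers_szego_fps s q * (fps_dilate (- (q * s)) (qExp (q ^ 2)) oo fps_X ^ 2)"
proof (rule fps_dilate_equation_unique[OF q,
    where Q = "1 - fps_const (q * s) * fps_X ^ 2" and P = "(1 - fps_X) * (1 - fps_const s * fps_X)"])
  let ?C = "fps_dilate (- (q * s)) (qExp (q ^ 2)) oo fps_X ^ 2"
  show "(1 - fps_const (q * s) * fps_X ^ 2) * fps_dilate q (rogers_szego_sq_fps s q)
    = (1 - fps_X) * (1 - fps_const s * fps_X) * rogers_szego_sq_fps s q"
    using rogers_szego_sq_fps_dilate[OF q] by (simp add: mult.assoc)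
  have "(1 - fps_const (q * s) * fps_X ^ 2) * fps_dilate q (rogers_szego_fps s q * ?C)
      = fps_dilate q (rogers_szego_fps s q) * ((1 - fps_const (q * s) * fps_X ^ 2) * fps_dilate q ?C)"
    by (simp add: fps_dilate_mult mult_ac)
  also have "\<dots> = (1 - fps_X) * (1 - fps_const s * fps_X) * (rogers_szego_fps s q * ?C)"
    by (simp add: rogers_szego_fps_dilate[OF q] qExp_compose_X_power2_dilate[OF power2_power_neq_one[OF q]]
        mult_ac)
  finally show "(1 - fps_const (q * s) * fps_X ^ 2) * fps_dilate q (rogers_szego_fps s q * ?C)
      = (1 - fps_X) * (1 - fps_const s * fps_X) * (rogers_szego_fps s q * ?C)" .
qed (simp_all add: rogers_szego_sq_fps_def rogers_szego_fps_def qExp_def fps_compose_X_power2_nth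
    numeral_2_eq_2)

lemma rogers_szego_sq_fps_eq_mult_qbinomial:
  assumes q: "\<And>n. n > 0 \<Longrightarrow> q ^ n \<noteq> 1" and "s \<noteq> 0"
  shows "rogers_szego_sq_fps s q
    = (qbinomial_fps (q * s) (q ^ 2) oo fps_X ^ 2) * fps_dilate s (qbinomial_fps (- 1 / s) q)"
proof (rule fps_dilate_equation_unique[OF q,
    where Q = "(1 + fps_X) * (1 - fps_const (q * s) * fps_X ^ 2)"
      and P = "(1 - fps_X ^ 2) * (1 - fps_const s * fps_X)"])
  let ?M = "qbinomial_fps (q * s) (q ^ 2) oo fps_X ^ 2" and ?N = "fps_dilate s (qbinomial_fps (- 1 / s) q)"
  show "(1 + fps_X) * (1 - fps_const (q * s) * fps_X ^ 2) * fps_dilate q (rogers_szego_sq_fps s q)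
    = (1 - fps_X ^ 2) * (1 - fps_const s * fps_X) * rogers_szego_sq_fps s q"
    by (simp add: rogers_szego_sq_fps_dilate[OF q] mult.assoc flip: one_plus_X_mult_one_minus_X)
  have "(1 + fps_X) * fps_dilate q ?N = (1 - fps_const s * fps_X) * ?N"
    using arg_cong[OF qbinomial_fps_dilate[OF q, of "- 1 / s"], of "fps_dilate s"] \<open>s \<noteq> 0\<close>
    by (simp add: fps_dilate_mult fps_dilate_commute[of q])
  then have "(1 + fps_X) * (1 - fps_const (q * s) * fps_X ^ 2) * fps_dilate q (?M * ?N)
      = ((1 - fps_const (q * s) * fps_X ^ 2) * fps_dilate q ?M) * ((1 - fps_const s * fps_X) * ?N)"
    by (simp add: fps_dilate_mult mult_ac)
  then show "(1 + fps_X) * (1 - fps_const (q * s) * fps_X ^ 2) * fps_dilate q (?M * ?N)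
      = (1 - fps_X ^ 2) * (1 - fps_const s * fps_X) * (?M * ?N)"
    by (simp add: qbinomial_fps_compose_X_power2_dilate[OF power2_power_neq_one[OF q]] mult_ac)
qed (simp_all add: rogers_szego_sq_fps_def qbinomial_fps_def fps_compose_X_power2_nth)

lemma qbinomial_fps_mult_rogers_szego_sq_fps:
  assumes q: "\<And>n. n > 0 \<Longrightarrow> q ^ n \<noteq> 1"
  shows "fps_dilate (-1) (qbinomial_fps (- s) q) * rogers_szego_sq_fps s q
    = qbinomial_fps (q * s) (q ^ 2) oo fps_X ^ 2"
proof (rule fps_dilate_equation_unique[OF q,
    where Q = "(1 - fps_const s * fps_X) * (1 - fps_const (q * s) * fps_X ^ 2)"
      and P = "(1 - fps_X ^ 2) * (1 - fps_const s * fps_X)"])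
  let ?T = "fps_dilate (-1) (qbinomial_fps (- s) q)"
  have T: "(1 - fps_const s * fps_X) * fps_dilate q ?T = (1 + fps_X) * ?T"
    using arg_cong[OF qbinomial_fps_dilate[OF q, of "- s"], of "fps_dilate (-1)"]
    by (simp add: fps_dilate_mult fps_dilate_commute[of q])
  have "(1 - fps_const s * fps_X) * (1 - fps_const (q * s) * fps_X ^ 2)
        * fps_dilate q (?T * rogers_szego_sq_fps s q)
      = ((1 - fps_const s * fps_X) * fps_dilate q ?T)
        * ((1 - fps_const (q * s) * fps_X ^ 2) * fps_dilate q (rogers_szego_sq_fps s q))"
    by (simp add: fps_dilate_mult mult_ac)
  also have "\<dots> = ((1 + fps_X) * ?T) * ((1 - fps_X) * ((1 - fps_const s * fps_X) * rogers_szego_sq_fps s q))"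
    by (simp only: T rogers_szego_sq_fps_dilate[OF q])
  also have "\<dots> = (1 - fps_X ^ 2) * (1 - fps_const s * fps_X) * (?T * rogers_szego_sq_fps s q)"
    by (simp add: mult_ac flip: one_plus_X_mult_one_minus_X)
  finally show "(1 - fps_const s * fps_X) * (1 - fps_const (q * s) * fps_X ^ 2)
        * fps_dilate q (?T * rogers_szego_sq_fps s q)
      = (1 - fps_X ^ 2) * (1 - fps_const s * fps_X) * (?T * rogers_szego_sq_fps s q)" .
  show "(1 - fps_const s * fps_X) * (1 - fps_const (q * s) * fps_X ^ 2)
        * fps_dilate q (qbinomial_fps (q * s) (q ^ 2) oo fps_X ^ 2)
      = (1 - fps_X ^ 2) * (1 - fps_const s * fps_X) * (qbinomial_fps (q * s) (q ^ 2) oo fps_X ^ 2)"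
    by (simp add: qbinomial_fps_compose_X_power2_dilate[OF power2_power_neq_one[OF q]] mult_ac)
qed (simp_all add: rogers_szego_sq_fps_def qbinomial_fps_def fps_compose_X_power2_nth)

lemma rogers_szego_power2_eq_sum_rogers_szego:
  assumes q: "\<And>n. n > 0 \<Longrightarrow> q ^ n \<noteq> 1"
  shows "rogers_szego n s (q ^ 2) =
    (\<Sum>j=0..n div 2. (-1) ^ j * q ^ (j ^ 2) * qpoch q (q ^ 2) j * qbinom q n (2 * j)
                     * s ^ j * rogers_szego (n - 2 * j) s q)"
proof -
  have "rogers_szego n s (q ^ 2) = qpoch q q n * rogers_szego_sq_fps s q $ n"
    using qpoch_self_nonzero[OF q] by (simp add: rogers_szego_sq_fps_def)
  also have "\<dots> = (\<Sum>j=0..n div 2. qpoch q q n * ((- (q * s)) ^ j * ((q ^ 2) ^ (j choose 2)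
      / qpoch (q ^ 2) (q ^ 2) j) * (rogers_szego (n - 2 * j) s q / qpoch q q (n - 2 * j))))"
    by (simp add: rogers_szego_sq_fps_eq_mult_qExp[OF q] fps_mult_compose_X_power2_nth
        rogers_szego_fps_def qExp_def sum_distrib_left)
  also have "\<dots> = (\<Sum>j=0..n div 2. (-1) ^ j * q ^ (j ^ 2) * qpoch q (q ^ 2) j * qbinom q n (2 * j)
                     * s ^ j * rogers_szego (n - 2 * j) s q)"
  proof (rule sum.cong)
    fix j assume "j \<in> {0..n div 2}"
    then have "2 * j \<le> n" by auto
    then show "qpoch q q n * ((- (q * s)) ^ j * ((q ^ 2) ^ (j choose 2) / qpoch (q ^ 2) (q ^ 2) j)
        * (rogers_szego (n - 2 * j) s q / qpoch q q (n - 2 * j)))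
      = (-1) ^ j * q ^ (j ^ 2) * qpoch q (q ^ 2) j * qbinom q n (2 * j) * s ^ j * rogers_szego (n - 2 * j) s q"
      using qpoch_self_nonzero[OF q] qpoch_self_nonzero[OF power2_power_neq_one[OF q]]
        qpoch_odd_nonzero[OF q]
      by (simp add: qbinom_def qpoch_double power_square_eq_choose_two power_minus[of "q * s"] power_mult_distrib)
  qed simp
  finally show ?thesis .
qed

lemma rogers_szego_power2_eq_sum_qpoch:
  assumes q: "\<And>n. n > 0 \<Longrightarrow> q ^ n \<noteq> 1" and "s \<noteq> 0"
  shows "rogers_szego n s (q ^ 2) =
    (\<Sum>j=0..n div 2. qbinom q n (2 * j) * qpoch q (q ^ 2) j * qpoch (q * s) (q ^ 2) j
                     * s ^ (n - 2 * j) * qpoch (- 1 / s) q (n - 2 * j))"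
proof -
  have "rogers_szego n s (q ^ 2) = qpoch q q n * rogers_szego_sq_fps s q $ n"
    using qpoch_self_nonzero[OF q] by (simp add: rogers_szego_sq_fps_def)
  also have "\<dots> = (\<Sum>j=0..n div 2. qpoch q q n * (qpoch (q * s) (q ^ 2) j / qpoch (q ^ 2) (q ^ 2) j
      * (s ^ (n - 2 * j) * (qpoch (- 1 / s) q (n - 2 * j) / qpoch q q (n - 2 * j)))))"
    by (simp add: rogers_szego_sq_fps_eq_mult_qbinomial[OF assms] mult.commute[of "_ oo _"]
        fps_mult_compose_X_power2_nth qbinomial_fps_def sum_distrib_left)
  also have "\<dots> = (\<Sum>j=0..n div 2. qbinom q n (2 * j) * qpoch q (q ^ 2) j * qpoch (q * s) (q ^ 2) j
                     * s ^ (n - 2 * j) * qpoch (- 1 / s) q (n - 2 * j))"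
  proof (rule sum.cong)
    fix j assume "j \<in> {0..n div 2}"
    then have "2 * j \<le> n" by auto
    then show "qpoch q q n * (qpoch (q * s) (q ^ 2) j / qpoch (q ^ 2) (q ^ 2) j
        * (s ^ (n - 2 * j) * (qpoch (- 1 / s) q (n - 2 * j) / qpoch q q (n - 2 * j))))
      = qbinom q n (2 * j) * qpoch q (q ^ 2) j * qpoch (q * s) (q ^ 2) j
        * s ^ (n - 2 * j) * qpoch (- 1 / s) q (n - 2 * j)"
      using qpoch_self_nonzero[OF q] qpoch_self_nonzero[OF power2_power_neq_one[OF q]]
        qpoch_odd_nonzero[OF q]
      by (simp add: qbinom_def qpoch_double)
  qed simp
  finally show ?thesis .
qed

lemma alternating_sum_rogers_szego_power2:
  assumes q: "\<And>n. n > 0 \<Longrightarrow> q ^ n \<noteq> 1"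
  shows "(\<Sum>k=0..n. (-1) ^ k * qpoch (- s) q k * qbinom q n k * rogers_szego (n - k) s (q ^ 2))
    = qpoch q q n * (qbinomial_fps (q * s) (q ^ 2) oo fps_X ^ 2) $ n"
proof -
  have "qpoch q q n * (qbinomial_fps (q * s) (q ^ 2) oo fps_X ^ 2) $ n
      = qpoch q q n * (fps_dilate (-1) (qbinomial_fps (- s) q) * rogers_szego_sq_fps s q) $ n"
    by (simp only: qbinomial_fps_mult_rogers_szego_sq_fps[OF q])
  also have "\<dots> = (\<Sum>k=0..n. qpoch q q n * ((-1) ^ k * (qpoch (- s) q k / qpoch q q k)
          * (rogers_szego (n - k) s (q ^ 2) / qpoch q q (n - k))))"
    by (simp add: fps_mult_nth qbinomial_fps_def rogers_szego_sq_fps_def sum_distrib_left)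
  also have "\<dots> = (\<Sum>k=0..n. (-1) ^ k * qpoch (- s) q k * qbinom q n k * rogers_szego (n - k) s (q ^ 2))"
    using qpoch_self_nonzero[OF q] by (intro sum.cong) (simp_all add: qbinom_def field_simps)
  finally show ?thesis ..
qed

theorem lemma1p3:
  fixes q s :: "'a::field"
  assumes q_generic: "\<And>n. n > 0 \<Longrightarrow> q ^ n \<noteq> 1"
  shows "Abs_fps (\<lambda>n. rogers_szego n s (q^2) / qpoch q q n)
           = fps_compose (qexp q) (fps_const s * fps_X) * qexp q
             * inverse (fps_compose (qexp (q^2)) (fps_const (q * s) * fps_X ^ 2))
     \<and> (\<forall>n::nat. rogers_szego n s (q^2) =
           (\<Sum>j=0..n div 2. (-1) ^ j * q ^ (j^2) * qpoch q (q^2) j * qbinom q n (2*j)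
                              * s ^ j * rogers_szego (n - 2*j) s q))
     \<and> (\<forall>n::nat. s \<noteq> 0 \<longrightarrow> rogers_szego n s (q^2) =
           (\<Sum>j=0..n div 2. qbinom q n (2*j) * qpoch q (q^2) j * qpoch (q * s) (q^2) j
                              * s ^ (n - 2*j) * qpoch (- 1 / s) q (n - 2*j)))
     \<and> (\<forall>n::nat. (\<Sum>k=0..2*n. (-1) ^ k * qpoch (- s) q k * qbinom q (2*n) k
                              * rogers_szego (2*n - k) s (q^2))
           = qpoch q (q^2) n * qpoch (q * s) (q^2) n)
     \<and> (\<forall>n::nat. (\<Sum>k=0..2*n+1. (-1) ^ k * qpoch (- s) q k * qbinom q (2*n+1) k
                              * rogers_szego (2*n + 1 - k) s (q^2)) = 0)"
proof -
  note q2_generic = power2_power_neq_one[OF q_generic]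
  have "Abs_fps (\<lambda>n. rogers_szego n s (q^2) / qpoch q q n)
      = fps_compose (qexp q) (fps_const s * fps_X) * qexp q
        * inverse (fps_compose (qexp (q^2)) (fps_const (q * s) * fps_X ^ 2))"
    using rogers_szego_sq_fps_eq_mult_qExp[OF q_generic, of s]
    by (simp add: rogers_szego_sq_fps_def rogers_szego_fps_eq[OF q_generic]
        fps_compose_linear_eq_dilate inverse_qexp_compose_X_power2[OF q2_generic])
  moreover have "(\<Sum>k=0..2*n. (-1) ^ k * qpoch (- s) q k * qbinom q (2*n) k * rogers_szego (2*n - k) s (q^2))
      = qpoch q (q^2) n * qpoch (q * s) (q^2) n" for n
    using alternating_sum_rogers_szego_power2[OF q_generic, of s "2 * n"] qpoch_self_nonzero[OF q2_generic]
    by (simp add: fps_compose_X_power2_nth qbinomial_fps_def qpoch_double)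
  moreover have "(\<Sum>k=0..2*n+1. (-1) ^ k * qpoch (- s) q k * qbinom q (2*n+1) k
      * rogers_szego (2*n + 1 - k) s (q^2)) = 0" for n
    using alternating_sum_rogers_szego_power2[OF q_generic, of s "2 * n + 1"]
    by (simp add: fps_compose_X_power2_nth)
  ultimately show ?thesis
    using rogers_szego_power2_eq_sum_rogers_szego[OF q_generic] rogers_szego_power2_eq_sum_qpoch[OF q_generic]
    by blast
qed

end
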